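(* Let $n\ge 1$ and let $f_1,\dots,f_n:\mathbb{R}^n\to\mathbb{R}$ be $C^1$ functions such that for all $x\in\mathbb{R}^n$ $$-f_i(x)+\sum_{j=1}^n f_j(x)\frac{\partial f_i}{\partial x_j}(x)=0\quad(1\le i\le n),\qquad \sum_{i,j=1}^n f_{j,i}(x)f_{i,j}(x)=0,\qquad \sum_{i=1}^n f_{i,i}(x)=0 .$$ Then the functions $v_i(t,x):=-\frac{f_i(x)}{1-t}$, $1\le i\le n$, satisfy the incompressible Euler equations on $[0,1)\times\mathbb{R}^n$ with initial data $h_i=-f_i$.
   Context: The incompressible Euler equations on $\mathbb{R}^n$ are $\partial_t v_i+\sum_{j=1}^n v_j\partial_{x_j}v_i=-\partial_{x_i}p$ ($1\le i\le n$), $\sum_{i=1}^n\partial_{x_i}v_i=0$, $v_i(0,x)=h_i(x)$, for a velocity field $v$ and a pressure $p$. Notation: $f_{i,j}:=\partial f_i/\partial x_j$. *)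

theory Defs
  imports "HOL-Analysis.Analysis"
begin

definition has_partial :: "(real^'n \<Rightarrow> real) \<Rightarrow> 'n \<Rightarrow> real^'n \<Rightarrow> bool" where
  "has_partial g j x \<longleftrightarrow> (\<lambda>s. g (x + s *\<^sub>R axis j 1)) differentiable (at 0)"

definition partial :: "(real^'n \<Rightarrow> real) \<Rightarrow> 'n \<Rightarrow> real^'n \<Rightarrow> real" where
  "partial g j x = deriv (\<lambda>s. g (x + s *\<^sub>R axis j 1)) 0"

definition C1_field :: "(real^'n \<Rightarrow> real^'n) \<Rightarrow> bool" where
  "C1_field f \<longleftrightarrow> (\<forall>i j. (\<forall>x. has_partial (\<lambda>y. f y $ i) j x) \<and>
      continuous_on UNIV (\<lambda>x. partial (\<lambda>y. f y $ i) j x))"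

definition euler_solution ::
  "(real \<Rightarrow> real^'n \<Rightarrow> real^'n) \<Rightarrow> (real \<Rightarrow> real^'n \<Rightarrow> real) \<Rightarrow> real set \<Rightarrow> (real^'n \<Rightarrow> real^'n) \<Rightarrow> bool" where
  "euler_solution v p T h \<longleftrightarrow>
     (\<forall>t\<in>T. \<forall>x. \<forall>i.
        (\<exists>dt. ((\<lambda>s. v s x $ i) has_real_derivative dt) (at t within T) \<and>
              (\<forall>j. has_partial (\<lambda>y. v t y $ i) j x) \<and>
              has_partial (p t) i x \<and>
              dt + (\<Sum>j\<in>UNIV. v t x $ j * partial (\<lambda>y. v t y $ i) j x) = - partial (p t) i x)) \<and>
     (\<forall>t\<in>T. \<forall>x. (\<Sum>i\<in>UNIV. partial (\<lambda>y. v t y $ i) i x) = 0) \<and>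
     (\<forall>x. v 0 x = h x)"

end

theory Submission
  imports Defs
begin

text \<open>The time factor \<open>c t = -1/(1 - t)\<close> solves the Riccati equation \<open>c' = -c\<^sup>2\<close>. For
  \<open>v t x = c t \<cdot> f x\<close> this gives \<open>\<partial>\<^sub>t v + (v\<cdot>\<nabla>)v = -c\<^sup>2 f + c\<^sup>2 (f\<cdot>\<nabla>)f\<close>, which vanishes by
  the profile equation \<open>(f\<cdot>\<nabla>)f = f\<close>; so \<open>v\<close> solves the Euler equations with constant
  pressure, and incompressibility is inherited from \<open>div f = 0\<close>.\<close>

lemma has_partial_cmult:
  assumes "has_partial g j x"
  shows "has_partial (\<lambda>y. c * g y) j x"
  using assms unfolding has_partial_def
  by (metis DERIV_cmult DERIV_deriv_iff_real_differentiable real_differentiable_def)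

lemma partial_cmult:
  assumes "has_partial g j x"
  shows "partial (\<lambda>y. c * g y) j x = c * partial g j x"
proof -
  have "((\<lambda>s. g (x + s *\<^sub>R axis j 1)) has_real_derivative partial g j x) (at 0)"
    using assms unfolding has_partial_def partial_def
    by (simp add: DERIV_deriv_iff_real_differentiable)
  then show ?thesis
    unfolding partial_def by (intro DERIV_imp_deriv DERIV_cmult)
qed

lemma has_partial_const: "has_partial (\<lambda>y. c) j x"
  unfolding has_partial_def by simp

lemma partial_const: "partial (\<lambda>y. c) j x = 0"
  unfolding partial_def by simp

lemma convective_term_scaleR:
  assumes "\<And>j. has_partial (\<lambda>y. f y $ i) j x"
  shows "(\<Sum>j\<in>UNIV. (c *\<^sub>R f x) $ j * partial (\<lambda>y. (c *\<^sub>R f y) $ i) j x)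
       = c\<^sup>2 * (\<Sum>j\<in>UNIV. f x $ j * partial (\<lambda>y. f y $ i) j x)"
  using partial_cmult[OF assms]
  by (simp add: sum_distrib_left power2_eq_square mult_ac)

lemma divergence_scaleR:
  assumes "\<And>i. has_partial (\<lambda>y. f y $ i) i x"
  shows "(\<Sum>i\<in>UNIV. partial (\<lambda>y. (c *\<^sub>R f y) $ i) i x)
       = c * (\<Sum>i\<in>UNIV. partial (\<lambda>y. f y $ i) i x)"
  using partial_cmult[OF assms] by (simp add: sum_distrib_left)

lemma euler_solution_self_similar:
  fixes f :: "real^'n \<Rightarrow> real^'n" and c :: "real \<Rightarrow> real"
  assumes partials: "\<And>i j x. has_partial (\<lambda>y. f y $ i) j x"
    and profile: "\<And>x i. - f x $ i + (\<Sum>j\<in>UNIV. f x $ j * partial (\<lambda>y. f y $ i) j x) = 0"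
    and div_free: "\<And>x. (\<Sum>i\<in>UNIV. partial (\<lambda>y. f y $ i) i x) = 0"
    and riccati: "\<And>t. t \<in> T \<Longrightarrow> (c has_real_derivative - (c t)\<^sup>2) (at t within T)"
  shows "euler_solution (\<lambda>t x. c t *\<^sub>R f x) (\<lambda>t y. 0) T (\<lambda>x. c 0 *\<^sub>R f x)"
  unfolding euler_solution_def
proof (intro conjI ballI allI)
  fix t x i assume "t \<in> T"
  have "((\<lambda>s. (c s *\<^sub>R f x) $ i) has_real_derivative - (c t)\<^sup>2 * f x $ i) (at t within T)"
    using DERIV_cmult_right[OF riccati[OF \<open>t \<in> T\<close>]] by simp
  moreover have "- (c t)\<^sup>2 * f x $ i
      + (\<Sum>j\<in>UNIV. (c t *\<^sub>R f x) $ j * partial (\<lambda>y. (c t *\<^sub>R f y) $ i) j x)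
      = - partial (\<lambda>y. 0) i x"
    using profile[of x i]
    by (subst convective_term_scaleR[OF partials]) (simp add: partial_const algebra_simps)
  moreover have "\<forall>j. has_partial (\<lambda>y. (c t *\<^sub>R f y) $ i) j x"
    using has_partial_cmult[OF partials] by simp
  ultimately show "\<exists>dt. ((\<lambda>s. (c s *\<^sub>R f x) $ i) has_real_derivative dt) (at t within T) \<and>
      (\<forall>j. has_partial (\<lambda>y. (c t *\<^sub>R f y) $ i) j x) \<and> has_partial (\<lambda>y. 0) i x \<and>
      dt + (\<Sum>j\<in>UNIV. (c t *\<^sub>R f x) $ j * partial (\<lambda>y. (c t *\<^sub>R f y) $ i) j x)
        = - partial (\<lambda>y. 0) i x"
    using has_partial_const by blast
next
  fix t x
  show "(\<Sum>i\<in>UNIV. partial (\<lambda>y. (c t *\<^sub>R f y) $ i) i x) = 0"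
    by (subst divergence_scaleR[OF partials]) (simp add: div_free)
qed simp

lemma blowup_factor_riccati:
  assumes "t \<noteq> 1"
  shows "((\<lambda>s. - (1 / (1 - s))) has_real_derivative - (- (1 / (1 - t)))\<^sup>2) (at t within T)"
  using assms by (auto intro!: derivative_eq_intros simp: power2_eq_square field_simps)

theorem proposition1p3:
  fixes f :: "real^'n \<Rightarrow> real^'n"
  assumes "C1_field f"
    and "\<And>x i. - f x $ i + (\<Sum>j\<in>UNIV. f x $ j * partial (\<lambda>y. f y $ i) j x) = 0"
    and "\<And>x. (\<Sum>i\<in>UNIV. \<Sum>j\<in>UNIV. partial (\<lambda>y. f y $ j) i x * partial (\<lambda>y. f y $ i) j x) = 0"
    and "\<And>x. (\<Sum>i\<in>UNIV. partial (\<lambda>y. f y $ i) i x) = 0"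
  shows "\<exists>p. euler_solution (\<lambda>t x. - (1 / (1 - t)) *\<^sub>R f x) p {0..<1} (\<lambda>x. - f x)"
proof
  have partials: "\<And>i j x. has_partial (\<lambda>y. f y $ i) j x"
    using assms(1) unfolding C1_field_def by blast
  have "\<And>t. t \<in> {0..<1} \<Longrightarrow> ((\<lambda>s. - (1 / (1 - s))) has_real_derivative
      - (- (1 / (1 - t)))\<^sup>2) (at t within {0..<1})"
    by (rule blowup_factor_riccati) auto
  from euler_solution_self_similar[OF partials assms(2) assms(4) this]
  show "euler_solution (\<lambda>t x. - (1 / (1 - t)) *\<^sub>R f x) (\<lambda>t y. 0) {0..<1} (\<lambda>x. - f x)"
    by simp
qed

end
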